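(* Let $T$ be an invertible operator in $\mathcal D(\mathcal P_n)$. Then $$K_h(T)=\varrho[T\phi_n]=d_h\bigl(Z(\phi_n),Z(T\phi_n)\bigr).$$
   Context: Let $n\ge 1$ be an integer and $\mathcal P_n$ the complex vector space of polynomials in one complex variable of degree at most $n$; $\phi_k(z)=z^k/k!$. $D$ is differentiation on $\mathcal P_n$, $I$ the identity, and $\mathcal D(\mathcal P_n)$ the linear span of $I,D,\dots,D^n$. For a nonzero $f$, $Z(f)$ is the multiset of roots of $f$ (with multiplicity; empty for nonzero constants); $Z(0)=\mathbb C$. For nonconstant $f$, the root radius is $\varrho[f]=\max\{|u|:u\in Z(f)\}$. For finite nonempty $A,B\subset\mathbb C$, $d_h(A,B)=\max_{y\in B}\min_{x\in A}|x-y|$, with conventions $d_h(\emptyset,\emptyset)=0$, $d_h(A,\emptyset)=d_h(\emptyset,A)=+\infty$ for $A\ne\emptyset$, and $d_h(A,B)=0$ if one of $A,B$ equals $\mathbb C$ and the other is nonempty. $K_h(T)=\sup_{f\in\mathcal P_n}d_h(Z(f),Z(Tf))$. *)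

theory Defs
  imports "HOL-Analysis.Analysis" "HOL-Computational_Algebra.Polynomial"
          "HOL-Library.Extended_Real"
begin

definition Pn :: "nat \<Rightarrow> complex poly set" where
  "Pn n = {p. degree p \<le> n}"

definition phi :: "nat \<Rightarrow> complex poly" where
  "phi k = monom (1 / of_nat (fact k)) k"

definition Dop :: "nat \<Rightarrow> (nat \<Rightarrow> complex) \<Rightarrow> complex poly \<Rightarrow> complex poly" where
  "Dop n a f = (\<Sum>k\<le>n. smult (a k) ((pderiv ^^ k) f))"

text \<open>Zero set (underlying set of the root multiset); Z 0 = UNIV, empty for nonzero constants.\<close>
definition Z :: "complex poly \<Rightarrow> complex set" where
  "Z f = {z. poly f z = 0}"

text \<open>Root radius of a nonconstant polynomial.\<close>
definition rootrad :: "complex poly \<Rightarrow> real" where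
  "rootrad f = Max (cmod ` Z f)"

definition dh :: "complex set \<Rightarrow> complex set \<Rightarrow> ereal" where
  "dh A B =
     (if A = {} \<and> B = {} then 0
      else if A = {} \<or> B = {} then \<infinity>
      else if A = UNIV \<or> B = UNIV then 0
      else ereal (Max ((\<lambda>y. Min ((\<lambda>x. cmod (x - y)) ` A)) ` B)))"

definition Kh :: "nat \<Rightarrow> (complex poly \<Rightarrow> complex poly) \<Rightarrow> ereal" where
  "Kh n T = (SUP f\<in>Pn n. dh (Z f) (Z (T f)))"

end

theory Submission
  imports Defs "HOL-Computational_Algebra.Fundamental_Theorem_Algebra"
begin

(* Write T = Dop n a; invertibility of T means a 0 \<noteq> 0, so T preserves degrees, and R is the
   root radius of T phi_n. Since T commutes with differentiation and pderiv (phi (k+1)) = phi k,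
   Gauss-Lucas puts the zeros of every T phi_k, k \<le> n, into the closed disc of radius R.
   For a root y of T f consider the linear functional L g = (T g)(0): it satisfies
   L ((X + z)^k) = k! (T phi_k)(z) \<noteq> 0 for |z| > R, and an induction on the number of factors
   driven by Laguerre's theorem on polar derivatives (a form of the Grace-Walsh-Szego coincidence
   theorem) shows L (\<Prod>i. X + u_i) \<noteq> 0 whenever all |u_i| > R. Applied to f(X + y), which
   L sends to (T f)(y) = 0, this gives a root of f within distance R of y. Hence K_h(T) \<le> R,
   and f = phi_n, whose only root is 0, attains the bound. *)

section \<open>Zeros of derivatives outside a disc\<close>

text \<open>For \<open>|\<zeta>| > R\<close> the set below is the image of the disc \<open>|r| \<le> R\<close> under \<open>r \<mapsto> 1 / (\<zeta> - r)\<close>.\<close>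

lemma inverse_disc_eq_cball:
  fixes \<zeta> :: complex
  assumes "0 \<le> R" "R < cmod \<zeta>"
  defines "A \<equiv> cmod \<zeta> ^ 2 - R ^ 2"
  shows "{w. cmod (\<zeta> * w - 1) \<le> R * cmod w} = cball (cnj \<zeta> / of_real A) (R / A)"
proof -
  have A: "A > 0" unfolding A_def using assms by (simp add: power_strict_mono)
  have identity:
    "cmod (\<zeta> * w - 1) ^ 2 - R ^ 2 * cmod w ^ 2 = A * (cmod (cnj \<zeta> / of_real A - w) ^ 2 - (R / A) ^ 2)" for w
  proof -
    define a b x y where "a = Re \<zeta>" "b = Im \<zeta>" "x = Re w" "y = Im w"
    have "cmod (\<zeta> * w - 1) ^ 2 - R ^ 2 * cmod w ^ 2 = A * (x^2 + y^2) - 2 * (a * x - b * y) + 1"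
      unfolding A_def a_b_x_y_def cmod_power2 by (simp add: power2_eq_square algebra_simps)
    also have "\<dots> = A * (x^2 + y^2) - 2 * (a * x - b * y) + (a^2 + b^2 - R^2) / A"
      using A unfolding A_def a_b_x_y_def by (simp add: cmod_power2)
    also have "\<dots> = A * ((a / A - x) ^ 2 + (b / A + y) ^ 2 - (R / A) ^ 2)"
      using A by (simp add: power2_eq_square field_simps)
    also have "\<dots> = A * (cmod (cnj \<zeta> / of_real A - w) ^ 2 - (R / A) ^ 2)"
    proof -
      have "Re (cnj \<zeta> / of_real A - w) = a / A - x" "Im (cnj \<zeta> / of_real A - w) = - (b / A + y)"
        unfolding a_b_x_y_def by simp_all
      then show ?thesis by (simp only: cmod_power2 power2_minus)
    qed
    finally show ?thesis .
  qed
  have "cmod (\<zeta> * w - 1) \<le> R * cmod w \<longleftrightarrow> cmod (cnj \<zeta> / of_real A - w) \<le> R / A" for w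
  proof -
    have "cmod (\<zeta> * w - 1) \<le> R * cmod w \<longleftrightarrow> cmod (\<zeta> * w - 1) ^ 2 - R ^ 2 * cmod w ^ 2 \<le> 0"
      using abs_le_square_iff[of "cmod (\<zeta> * w - 1)" "R * cmod w"] assms(1)
      by (simp add: power_mult_distrib)
    also have "\<dots> \<longleftrightarrow> cmod (cnj \<zeta> / of_real A - w) ^ 2 \<le> (R / A) ^ 2"
      unfolding identity using A by (simp add: mult_le_0_iff)
    also have "\<dots> \<longleftrightarrow> cmod (cnj \<zeta> / of_real A - w) \<le> R / A"
      using abs_le_square_iff[of "cmod (cnj \<zeta> / of_real A - w)" "R / A"] A assms(1) by simp
    finally show ?thesis .
  qed
  then show ?thesis unfolding set_eq_iff mem_Collect_eq mem_cball dist_norm by blast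
qed

lemma sum_inverse_diff_eq_inverse_diff_disc_point:
  fixes r :: "'i \<Rightarrow> complex"
  assumes "finite I" "I \<noteq> {}" "\<And>i. i \<in> I \<Longrightarrow> cmod (r i) \<le> R" "R < cmod \<zeta>"
  obtains \<rho> where "cmod \<rho> \<le> R" "(\<Sum>i\<in>I. 1 / (\<zeta> - r i)) = of_nat (card I) / (\<zeta> - \<rho>)"
proof -
  define S where "S = {w. cmod (\<zeta> * w - 1) \<le> R * cmod w}"
  have "0 \<le> R" using assms(2,3) norm_ge_zero order_trans by blast
  then have "convex S" unfolding S_def using inverse_disc_eq_cball assms(4) by (simp add: convex_cball)
  have "1 / (\<zeta> - r i) \<in> S" if "i \<in> I" for i
  proof -
    define w where "w = 1 / (\<zeta> - r i)"
    have "\<zeta> - r i \<noteq> 0" using assms(3,4) that by force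
    then have "\<zeta> * w - 1 = r i * w" unfolding w_def by (simp add: field_simps)
    then have "cmod (\<zeta> * w - 1) \<le> R * cmod w"
      using assms(3)[OF that] by (metis norm_mult mult_right_mono norm_ge_zero)
    then show ?thesis unfolding S_def w_def by simp
  qed
  define \<beta> where "\<beta> = (\<Sum>i\<in>I. 1 / (\<zeta> - r i)) / of_nat (card I)"
  have "card I > 0" using assms(1,2) by (simp add: card_gt_0_iff)
  have "\<beta> = (\<Sum>i\<in>I. (1 / real (card I)) *\<^sub>R (1 / (\<zeta> - r i)))"
    unfolding \<beta>_def by (simp add: scaleR_conv_of_real sum_divide_distrib mult.commute)
  then have "\<beta> \<in> S"
    using \<open>card I > 0\<close> convex_sum[OF assms(1) \<open>convex S\<close>, of "\<lambda>_. 1 / real (card I)"]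
      \<open>\<And>i. i \<in> I \<Longrightarrow> 1 / (\<zeta> - r i) \<in> S\<close>
    by simp
  then have \<beta>: "cmod (\<zeta> * \<beta> - 1) \<le> R * cmod \<beta>" unfolding S_def by simp
  then have "\<beta> \<noteq> 0" by auto
  show ?thesis
  proof
    show "cmod (\<zeta> - 1 / \<beta>) \<le> R"
    proof -
      have "\<zeta> - 1 / \<beta> = (\<zeta> * \<beta> - 1) / \<beta>" using \<open>\<beta> \<noteq> 0\<close> by (simp add: field_simps)
      then show ?thesis using \<beta> \<open>\<beta> \<noteq> 0\<close> by (simp add: norm_divide divide_le_eq)
    qed
    show "(\<Sum>i\<in>I. 1 / (\<zeta> - r i)) = of_nat (card I) / (\<zeta> - (\<zeta> - 1 / \<beta>))"
      using \<open>card I > 0\<close> unfolding \<beta>_def by simp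
  qed
qed

lemma poly_pderiv_prod_linear:
  fixes r :: "'i \<Rightarrow> complex"
  assumes "finite I" "\<And>i. i \<in> I \<Longrightarrow> r i \<noteq> \<zeta>"
  shows "poly (pderiv (\<Prod>i\<in>I. [:- r i, 1:])) \<zeta> = poly (\<Prod>i\<in>I. [:- r i, 1:]) \<zeta> * (\<Sum>i\<in>I. 1 / (\<zeta> - r i))"
  using assms
proof (induction I rule: finite_induct)
  case (insert j I)
  define P where "P = (\<Prod>i\<in>I. [:- r i, 1:])"
  define S where "S = (\<Sum>i\<in>I. 1 / (\<zeta> - r i))"
  have "\<zeta> - r j \<noteq> 0" using insert.prems by auto
  have "pderiv [:- r j, 1:] = 1" by (simp add: pderiv_pCons)
  then have "pderiv ([:- r j, 1:] * P) = [:- r j, 1:] * pderiv P + P"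
    by (simp only: pderiv_mult mult_1_right)
  then have "poly (pderiv ([:- r j, 1:] * P)) \<zeta> = poly [:- r j, 1:] \<zeta> * poly (pderiv P) \<zeta> + poly P \<zeta>"
    by (simp only: poly_add poly_mult)
  also have "\<dots> = (\<zeta> - r j) * (poly P \<zeta> * S) + poly P \<zeta>"
    using insert unfolding P_def S_def by simp
  also have "\<dots> = poly ([:- r j, 1:] * P) \<zeta> * (1 / (\<zeta> - r j) + S)"
    using \<open>\<zeta> - r j \<noteq> 0\<close> by (simp only: poly_mult) (simp add: field_simps)
  finally show ?case
    unfolding prod.insert[OF insert.hyps] sum.insert[OF insert.hyps] P_def S_def by (simp only: add.commute)
qed simp

lemma poly_pderiv_outside_roots_disc:
  fixes p :: "complex poly"
  assumes "degree p \<ge> 1" "\<And>z. R < cmod z \<Longrightarrow> poly p z \<noteq> 0" "R < cmod \<zeta>"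
  obtains \<rho> where "cmod \<rho> \<le> R" "poly (pderiv p) \<zeta> = of_nat (degree p) * poly p \<zeta> / (\<zeta> - \<rho>)"
proof -
  obtain r where p: "p = smult (lead_coeff p) (\<Prod>i<degree p. [:- r i, 1:])"
    using complex_poly_decompose' by metis
  have "poly p (r i) = 0" if "i < degree p" for i
    using that by (subst p) (auto simp: poly_prod)
  then have r: "cmod (r i) \<le> R" if "i \<in> {..<degree p}" for i
    using assms(2) that by force
  have "{..<degree p} \<noteq> {}" using assms(1) by (simp add: lessThan_empty_iff)
  obtain \<rho> where "cmod \<rho> \<le> R"
      and \<rho>: "(\<Sum>i<degree p. 1 / (\<zeta> - r i)) = of_nat (card {..<degree p}) / (\<zeta> - \<rho>)"
    using sum_inverse_diff_eq_inverse_diff_disc_point[of "{..<degree p}" r R \<zeta>]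
      \<open>{..<degree p} \<noteq> {}\<close> r assms(3) by blast
  have "poly (pderiv (\<Prod>i<degree p. [:- r i, 1:])) \<zeta>
      = poly (\<Prod>i<degree p. [:- r i, 1:]) \<zeta> * (\<Sum>i<degree p. 1 / (\<zeta> - r i))"
    using r assms(3) by (intro poly_pderiv_prod_linear) force+
  then have "poly (pderiv p) \<zeta> = poly p \<zeta> * (\<Sum>i<degree p. 1 / (\<zeta> - r i))"
    by (subst (1 2) p) (simp only: pderiv_smult poly_smult mult.assoc)
  also have "\<dots> = of_nat (degree p) * poly p \<zeta> / (\<zeta> - \<rho>)"
    unfolding \<rho> by simp
  finally show ?thesis using that \<open>cmod \<rho> \<le> R\<close> by blast
qed

lemma poly_pderiv_nonzero_outside_roots_disc:
  fixes p :: "complex poly"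
  assumes "degree p \<ge> 1" "\<And>z. R < cmod z \<Longrightarrow> poly p z \<noteq> 0" "R < cmod \<zeta>"
  shows "poly (pderiv p) \<zeta> \<noteq> 0"
proof -
  obtain \<rho> where "cmod \<rho> \<le> R" "poly (pderiv p) \<zeta> = of_nat (degree p) * poly p \<zeta> / (\<zeta> - \<rho>)"
    using poly_pderiv_outside_roots_disc[OF assms] by blast
  moreover have "\<zeta> \<noteq> \<rho>" using calculation(1) assms(3) by auto
  ultimately show ?thesis using assms by auto
qed

lemma polar_derivative_nonzero_outside_roots_disc:
  fixes p :: "complex poly"
  assumes "degree p \<ge> 1" "\<And>z. R < cmod z \<Longrightarrow> poly p z \<noteq> 0" "R < cmod \<zeta>" "R < cmod \<alpha>"
  shows "of_nat (degree p) * poly p \<zeta> + (\<alpha> - \<zeta>) * poly (pderiv p) \<zeta> \<noteq> 0"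
proof -
  obtain \<rho> where "cmod \<rho> \<le> R" and \<rho>: "poly (pderiv p) \<zeta> = of_nat (degree p) * poly p \<zeta> / (\<zeta> - \<rho>)"
    using poly_pderiv_outside_roots_disc[OF assms(1-3)] by blast
  then have "\<zeta> \<noteq> \<rho>" "\<alpha> \<noteq> \<rho>" using assms(3,4) by auto
  then have "of_nat (degree p) * poly p \<zeta> + (\<alpha> - \<zeta>) * poly (pderiv p) \<zeta>
      = of_nat (degree p) * poly p \<zeta> * (\<alpha> - \<rho>) / (\<zeta> - \<rho>)"
    unfolding \<rho> by (simp add: field_simps)
  then show ?thesis using assms \<open>\<zeta> \<noteq> \<rho>\<close> \<open>\<alpha> \<noteq> \<rho>\<close> by auto
qed

section \<open>Linear functionals on polynomials\<close>

definition linear_functional :: "(complex poly \<Rightarrow> complex) \<Rightarrow> bool" where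
  "linear_functional L \<longleftrightarrow> (\<forall>p q. L (p + q) = L p + L q) \<and> (\<forall>c p. L (smult c p) = c * L p)"

lemma linear_functional_sum:
  assumes "linear_functional L"
  shows "L (\<Sum>i\<in>A. f i) = (\<Sum>i\<in>A. L (f i))"
proof -
  have "L 0 = 0" using assms unfolding linear_functional_def by (metis mult_zero_left smult_0_left)
  then show ?thesis using assms
    by (induction A rule: infinite_finite_induct) (simp_all add: linear_functional_def)
qed

lemma poly_phi: "poly (phi k) z = z ^ k / fact k"
  unfolding phi_def by (simp add: poly_monom)

lemma degree_phi: "degree (phi k) = k"
  unfolding phi_def by (simp add: degree_monom_eq)

lemma pderiv_phi_Suc: "pderiv (phi (Suc k)) = phi k"
proof -
  have "of_nat (Suc k) * (1 / fact (Suc k)) = (1 / fact k :: complex)"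
    by (simp add: field_simps del: of_nat_Suc)
  then show ?thesis unfolding phi_def by (simp only: pderiv_monom diff_Suc_1 of_nat_fact)
qed

definition power_symbol :: "nat \<Rightarrow> (complex poly \<Rightarrow> complex) \<Rightarrow> complex poly" where
  "power_symbol m L = (\<Sum>k\<le>m. smult (L (monom 1 k) / fact k) (phi (m - k)))"

lemma linear_functional_linear_power:
  assumes "linear_functional L"
  shows "L ([:z, 1:] ^ m) = fact m * poly (power_symbol m L) z"
proof -
  have "[:z, 1:] ^ m = (\<Sum>k\<le>m. smult (of_nat (m choose k) * z ^ (m - k)) (monom 1 k))"
    by (subst poly_as_sum_of_monoms[symmetric])
       (simp add: degree_linear_power coeff_linear_poly_power smult_monom)
  then have "L ([:z, 1:] ^ m) = (\<Sum>k\<le>m. of_nat (m choose k) * z ^ (m - k) * L (monom 1 k))"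
    using assms by (simp add: linear_functional_sum linear_functional_def)
  also have "\<dots> = fact m * poly (power_symbol m L) z"
    unfolding power_symbol_def poly_sum sum_distrib_left
    by (intro sum.cong refl) (simp add: poly_phi binomial_fact)
  finally show ?thesis .
qed

lemma pderiv_sum: "pderiv (sum f A) = (\<Sum>x\<in>A. pderiv (f x))"
  by (induction A rule: infinite_finite_induct) (simp_all add: pderiv_add)

lemma pderiv_power_symbol_Suc: "pderiv (power_symbol (Suc m) L) = power_symbol m L"
proof -
  have "pderiv (phi 0) = 0" unfolding phi_def by (simp add: pderiv_monom)
  then show ?thesis
    unfolding power_symbol_def
    by (simp add: pderiv_add pderiv_sum pderiv_smult Suc_diff_le pderiv_phi_Suc sum.atMost_Suc)
qed

lemma degree_power_symbol:
  assumes "L 1 \<noteq> 0"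
  shows "degree (power_symbol m L) = m"
proof (rule antisym)
  show "degree (power_symbol m L) \<le> m"
    unfolding power_symbol_def
    by (intro degree_sum_le) (auto intro: order_trans[OF degree_smult_le] simp: degree_phi)
  have "coeff (power_symbol m L) m = (\<Sum>k\<le>m. if k = 0 then L 1 / fact m else 0)"
    unfolding power_symbol_def coeff_sum by (intro sum.cong refl) (auto simp: phi_def)
  then show "m \<le> degree (power_symbol m L)"
    using assms by (intro le_degree) simp
qed

lemma power_symbol_zero_free_descend:
  assumes "\<forall>z. R < cmod z \<longrightarrow> poly (power_symbol m L) z \<noteq> 0" "L 1 \<noteq> 0" "k \<le> m"
  shows "\<forall>z. R < cmod z \<longrightarrow> poly (power_symbol k L) z \<noteq> 0"
  using assms(1,3)
proof (induction m)
  case (Suc m)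
  show ?case
  proof (cases "k = Suc m")
    case False
    have "degree (power_symbol (Suc m) L) \<ge> 1" using degree_power_symbol[of L "Suc m"] assms(2) by simp
    then have "poly (pderiv (power_symbol (Suc m) L)) z \<noteq> 0" if "R < cmod z" for z
      by (rule poly_pderiv_nonzero_outside_roots_disc) (use Suc.prems(1) that in auto)
    with Suc.IH False Suc.prems(2) show ?thesis by (simp add: pderiv_power_symbol_Suc)
  qed (use Suc.prems in simp)
qed simp

lemma linear_functional_prod_nonzero:
  assumes "linear_functional L" "L 1 \<noteq> 0"
    and "\<forall>z. R < cmod z \<longrightarrow> poly (power_symbol m L) z \<noteq> 0"
    and "\<forall>i<m. R < cmod (u i)"
  shows "L (\<Prod>i<m. [:u i, 1:]) \<noteq> 0"
  using assms
proof (induction m arbitrary: L)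
  case (Suc m L)
  txt \<open>Peel off the factor \<open>X + u m\<close>: up to \<open>m!\<close>, the power symbol of \<open>g \<mapsto> L ((X + u m) * g)\<close>
    is the polar derivative of \<open>power_symbol (Suc m) L\<close> with respect to \<open>u m\<close>, which is
    zero-free outside the disc by Laguerre's theorem.\<close>
  define \<alpha> where "\<alpha> = u m"
  define L' where "L' g = L ([:\<alpha>, 1:] * g)" for g
  define Q where "Q = power_symbol (Suc m) L"
  have "R < cmod \<alpha>" using Suc.prems(4) unfolding \<alpha>_def by simp
  have "linear_functional L'"
    using Suc.prems(1) unfolding linear_functional_def L'_def by (simp add: distrib_left mult_smult_right)
  have "\<forall>z. R < cmod z \<longrightarrow> poly (power_symbol 1 L) z \<noteq> 0"
    using power_symbol_zero_free_descend Suc.prems(2,3) by simp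
  then have "L' 1 \<noteq> 0"
    using linear_functional_linear_power[OF Suc.prems(1), of \<alpha> 1] \<open>R < cmod \<alpha>\<close> unfolding L'_def by simp
  have "degree Q = Suc m" unfolding Q_def using degree_power_symbol Suc.prems(2) by blast
  have "poly (power_symbol m L') z \<noteq> 0" if "R < cmod z" for z
  proof -
    have "[:\<alpha>, 1:] * [:z, 1:] ^ m = [:z, 1:] ^ Suc m + smult (\<alpha> - z) ([:z, 1:] ^ m)"
      by (simp add: algebra_simps smult_add_left[symmetric])
    then have "fact m * poly (power_symbol m L') z = L ([:z, 1:] ^ Suc m) + (\<alpha> - z) * L ([:z, 1:] ^ m)"
      using Suc.prems(1) unfolding L'_def linear_functional_linear_power[OF \<open>linear_functional L'\<close>, symmetric]
      by (simp add: linear_functional_def L'_def)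
    also have "\<dots> = fact m * (of_nat (degree Q) * poly Q z + (\<alpha> - z) * poly (pderiv Q) z)"
      using \<open>degree Q = Suc m\<close>
      unfolding Q_def pderiv_power_symbol_Suc linear_functional_linear_power[OF Suc.prems(1)]
      by (simp add: algebra_simps)
    finally show ?thesis
      using polar_derivative_nonzero_outside_roots_disc[of Q R z \<alpha>] \<open>degree Q = Suc m\<close> Suc.prems(3)
        that \<open>R < cmod \<alpha>\<close> unfolding Q_def by auto
  qed
  then have "L' (\<Prod>i<m. [:u i, 1:]) \<noteq> 0"
    using Suc.IH[OF \<open>linear_functional L'\<close> \<open>L' 1 \<noteq> 0\<close>] Suc.prems(4) by simp
  then show ?case unfolding L'_def \<alpha>_def by (simp add: mult.commute)
qed simp

section \<open>The operators Dop\<close>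

lemma smult_sum_right: "smult c (sum f A) = (\<Sum>x\<in>A. smult c (f x))"
  by (induction A rule: infinite_finite_induct) (simp_all add: smult_add_right)

lemma Dop_add: "Dop n a (p + q) = Dop n a p + Dop n a q"
  unfolding Dop_def by (simp add: higher_pderiv_add smult_add_right sum.distrib)

lemma Dop_smult: "Dop n a (smult c p) = smult c (Dop n a p)"
  unfolding Dop_def by (simp add: higher_pderiv_smult smult_sum_right ac_simps)

lemma Dop_0 [simp]: "Dop n a 0 = 0"
  unfolding Dop_def by simp

lemma higher_pderiv_pcompose_linear:
  "(pderiv ^^ k) (p \<circ>\<^sub>p [:c, 1:]) = (pderiv ^^ k) p \<circ>\<^sub>p [:c, 1:]"
  by (induction k) (simp_all add: pderiv_pcompose pderiv_pCons)

lemma Dop_pcompose_linear: "Dop n a (p \<circ>\<^sub>p [:c, 1:]) = Dop n a p \<circ>\<^sub>p [:c, 1:]"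
  unfolding Dop_def by (simp add: higher_pderiv_pcompose_linear pcompose_sum pcompose_smult)

lemma coeff_Dop_degree: "coeff (Dop n a p) (degree p) = a 0 * lead_coeff p"
proof -
  have "coeff (Dop n a p) (degree p) = (\<Sum>k\<le>n. if k = 0 then a 0 * lead_coeff p else 0)"
    unfolding Dop_def coeff_sum
    by (intro sum.cong refl) (auto simp: coeff_higher_pderiv coeff_eq_0)
  then show ?thesis by simp
qed

lemma degree_Dop_le: "degree (Dop n a p) \<le> degree p"
  unfolding Dop_def
  by (intro degree_sum_le) (auto intro: order_trans[OF degree_smult_le] simp: degree_higher_pderiv)

lemma degree_Dop:
  assumes "a 0 \<noteq> 0"
  shows "degree (Dop n a p) = degree p"
proof (cases "p = 0")
  case False
  then have "coeff (Dop n a p) (degree p) \<noteq> 0" using assms by (simp add: coeff_Dop_degree)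
  then show ?thesis using degree_Dop_le le_degree by (metis antisym)
qed simp

lemma Dop_const: "Dop n a [:c:] = [:a 0 * c:]"
  using degree_Dop_le[of n a "[:c:]"] coeff_Dop_degree[of n a "[:c:]"]
  by (metis degree_0_id degree_pCons_0 le_zero_eq lead_coeff_pCons(2) coeff_pCons_0 pCons_0_0)

lemma linear_functional_poly_Dop: "linear_functional (\<lambda>g. poly (Dop n a g) y)"
  unfolding linear_functional_def by (simp add: Dop_add Dop_smult)

lemma pcompose_x_power: "[:0, 1:] ^ k \<circ>\<^sub>p q = q ^ k"
  by (induction k) (simp_all add: pcompose_mult pcompose_1 pcompose_pCons)

lemma power_symbol_Dop: "power_symbol k (\<lambda>g. poly (Dop n a g) 0) = Dop n a (phi k)"
proof -
  have "poly (power_symbol k (\<lambda>g. poly (Dop n a g) 0)) z = poly (Dop n a (phi k)) z" for z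
  proof -
    have "[:z, 1:] ^ k = smult (fact k) (phi k) \<circ>\<^sub>p [:z, 1:]"
      unfolding phi_def by (simp add: smult_monom monom_altdef pcompose_smult pcompose_x_power)
    then have "fact k * poly (power_symbol k (\<lambda>g. poly (Dop n a g) 0)) z = fact k * poly (Dop n a (phi k)) z"
      unfolding linear_functional_linear_power[OF linear_functional_poly_Dop, symmetric]
      by (simp add: Dop_pcompose_linear poly_pcompose Dop_smult)
    then show ?thesis by simp
  qed
  then show ?thesis by (simp add: poly_eq_poly_eq_iff[symmetric] fun_eq_iff)
qed

lemma poly_Dop_root_near_root:
  assumes "a 0 \<noteq> 0" "0 \<le> R" "\<forall>z. R < cmod z \<longrightarrow> poly (Dop n a (phi n)) z \<noteq> 0"
    and "degree f \<le> n" "poly (Dop n a f) y = 0"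
  shows "\<exists>x. poly f x = 0 \<and> cmod (x - y) \<le> R"
proof (rule ccontr)
  assume far: "\<nexists>x. poly f x = 0 \<and> cmod (x - y) \<le> R"
  then have "f \<noteq> 0" using assms(2) by (metis diff_self norm_zero poly_0)
  obtain r where f: "f = smult (lead_coeff f) (\<Prod>i<degree f. [:- r i, 1:])"
    using complex_poly_decompose' by metis
  define L where "L g = poly (Dop n a g) 0" for g
  have L: "linear_functional L" "L 1 \<noteq> 0"
    unfolding L_def using linear_functional_poly_Dop Dop_const[of n a 1] assms(1) by (simp_all add: pCons_one)
  have "\<forall>z. R < cmod z \<longrightarrow> poly (power_symbol n L) z \<noteq> 0"
    using assms(3) unfolding L_def power_symbol_Dop .
  then have "\<forall>z. R < cmod z \<longrightarrow> poly (power_symbol (degree f) L) z \<noteq> 0"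
    using L(2) assms(4) by (rule power_symbol_zero_free_descend)
  moreover have "\<forall>i<degree f. R < cmod (y - r i)"
  proof (intro allI impI)
    fix i assume "i < degree f"
    then have "poly f (r i) = 0" by (subst f) (auto simp: poly_prod)
    then show "R < cmod (y - r i)" using far by (metis linorder_not_less norm_minus_commute)
  qed
  ultimately have "L (\<Prod>i<degree f. [:y - r i, 1:]) \<noteq> 0"
    by (rule linear_functional_prod_nonzero[OF L])
  moreover have "[:- r i, 1:] \<circ>\<^sub>p [:y, 1:] = [:y - r i, 1:]" for i
    by (simp add: pcompose_pCons)
  then have "(\<Prod>i<degree f. [:y - r i, 1:]) = (\<Prod>i<degree f. [:- r i, 1:]) \<circ>\<^sub>p [:y, 1:]"
    by (simp add: pcompose_prod)
  ultimately have "poly (Dop n a (\<Prod>i<degree f. [:- r i, 1:])) y \<noteq> 0"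
    unfolding L_def by (simp add: Dop_pcompose_linear poly_pcompose)
  then have "poly (Dop n a f) y \<noteq> 0"
    using \<open>f \<noteq> 0\<close> by (subst f) (simp add: Dop_smult)
  then show False using assms(5) by contradiction
qed

section \<open>Zero sets and the distance dh\<close>

lemma finite_Z: "p \<noteq> 0 \<Longrightarrow> finite (Z p)"
  unfolding Z_def by (rule poly_roots_finite)

lemma Z_eq_empty_iff:
  assumes "p \<noteq> 0"
  shows "Z p = {} \<longleftrightarrow> degree p = 0"
proof
  assume "Z p = {}"
  then show "degree p = 0"
    using fundamental_theorem_of_algebra[of p] constant_degree[of p] unfolding Z_def by auto
next
  assume "degree p = 0"
  then have p: "[:coeff p 0:] = p" by (rule degree_0_id)
  then have "poly p z = coeff p 0" for z by (metis poly_const_conv)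
  moreover have "coeff p 0 \<noteq> 0" using assms p by fastforce
  ultimately show "Z p = {}" unfolding Z_def by simp
qed

lemma dh_le_ereal:
  assumes "finite A" "finite B" "B = {} \<Longrightarrow> A = {}" "0 \<le> R"
    and "\<And>y. y \<in> B \<Longrightarrow> \<exists>x\<in>A. cmod (x - y) \<le> R"
  shows "dh A B \<le> ereal R"
proof (cases "A = {}")
  case True
  then show ?thesis using assms(4,5) unfolding dh_def by (cases "B = {}") auto
next
  case False
  then have "A \<noteq> UNIV" "B \<noteq> UNIV" "B \<noteq> {}"
    using assms(1-3) infinite_UNIV_char_0 by auto
  have "Min ((\<lambda>x. cmod (x - y)) ` A) \<le> R" if "y \<in> B" for y
    using assms(1) assms(5)[OF that] by (auto intro: order_trans[OF Min_le])
  then show ?thesis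
    using False \<open>A \<noteq> UNIV\<close> \<open>B \<noteq> UNIV\<close> \<open>B \<noteq> {}\<close> assms(2) unfolding dh_def by simp
qed

lemma dh_Z_Dop_le:
  assumes "a 0 \<noteq> 0" "0 \<le> R" "\<forall>z. R < cmod z \<longrightarrow> poly (Dop n a (phi n)) z \<noteq> 0"
    and "degree f \<le> n"
  shows "dh (Z f) (Z (Dop n a f)) \<le> ereal R"
proof (cases "f = 0")
  case True
  then have "Z f = UNIV" "Z (Dop n a f) = UNIV" by (simp_all add: Z_def)
  then show ?thesis using assms(2) by (simp add: dh_def)
next
  case False
  then have "coeff (Dop n a f) (degree f) \<noteq> 0"
    using assms(1) by (simp add: coeff_Dop_degree)
  then have "Dop n a f \<noteq> 0" by auto
  have "Z (Dop n a f) = {} \<Longrightarrow> Z f = {}"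
    using False \<open>Dop n a f \<noteq> 0\<close> assms(1) by (simp add: Z_eq_empty_iff degree_Dop)
  moreover have "\<exists>x\<in>Z f. cmod (x - y) \<le> R" if "y \<in> Z (Dop n a f)" for y
    using poly_Dop_root_near_root[OF assms] that unfolding Z_def by blast
  ultimately show ?thesis
    using dh_le_ereal[OF finite_Z[OF False] finite_Z[OF \<open>Dop n a f \<noteq> 0\<close>] _ assms(2)] by blast
qed

lemma dh_zero_singleton:
  assumes "finite B" "B \<noteq> {}"
  shows "dh {0} B = ereal (Max (cmod ` B))"
proof -
  have "B \<noteq> UNIV" "{0::complex} \<noteq> UNIV" using assms(1) infinite_UNIV_char_0 by auto
  then show ?thesis using assms(2) unfolding dh_def by (simp add: image_image)
qed

lemma root_le_rootrad: "p \<noteq> 0 \<Longrightarrow> poly p z = 0 \<Longrightarrow> cmod z \<le> rootrad p"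
  unfolding rootrad_def using finite_Z by (intro Max_ge) (auto simp: Z_def)

lemma rootrad_nonneg_zero_free:
  assumes "degree p \<ge> 1"
  shows "0 \<le> rootrad p" "\<forall>z. rootrad p < cmod z \<longrightarrow> poly p z \<noteq> 0"
proof -
  have "p \<noteq> 0" using assms by auto
  with assms obtain z where "poly p z = 0" using Z_eq_empty_iff unfolding Z_def by fastforce
  then show "0 \<le> rootrad p" using root_le_rootrad[OF \<open>p \<noteq> 0\<close>] by (meson norm_ge_zero order_trans)
  show "\<forall>z. rootrad p < cmod z \<longrightarrow> poly p z \<noteq> 0" using root_le_rootrad[OF \<open>p \<noteq> 0\<close>] by (metis not_le)
qed

lemma dh_Z_phi:
  assumes "k \<ge> 1" "degree p \<ge> 1"
  shows "dh (Z (phi k)) (Z p) = ereal (rootrad p)"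
proof -
  have "p \<noteq> 0" using assms(2) by auto
  then have "Z p \<noteq> {}" using Z_eq_empty_iff assms(2) by simp
  moreover have "Z (phi k) = {0}" unfolding Z_def using assms(1) by (auto simp: poly_phi)
  ultimately show ?thesis unfolding rootrad_def using dh_zero_singleton finite_Z[OF \<open>p \<noteq> 0\<close>] by simp
qed

lemma inj_on_Dop_imp_a_0_nonzero:
  assumes "inj_on (Dop n a) (Pn n)"
  shows "a 0 \<noteq> 0"
proof
  assume "a 0 = 0"
  then have "Dop n a 1 = Dop n a 0" using Dop_const[of n a 1] by (simp add: pCons_one)
  moreover have "1 \<in> Pn n" "0 \<in> Pn n" unfolding Pn_def by auto
  ultimately have "(1 :: complex poly) = 0" by (rule inj_onD[OF assms])
  then show False by simp
qed

theorem mainTheorem4: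
  fixes n :: nat and a :: "nat \<Rightarrow> complex"
  assumes "n \<ge> 1"
    and "bij_betw (Dop n a) (Pn n) (Pn n)"
  shows "Kh n (Dop n a) = ereal (rootrad (Dop n a (phi n)))
       \<and> ereal (rootrad (Dop n a (phi n))) = dh (Z (phi n)) (Z (Dop n a (phi n)))"
proof -
  have "a 0 \<noteq> 0" using bij_betw_imp_inj_on[OF assms(2)] by (rule inj_on_Dop_imp_a_0_nonzero)
  define R where "R = rootrad (Dop n a (phi n))"
  have "degree (Dop n a (phi n)) \<ge> 1"
    using \<open>a 0 \<noteq> 0\<close> assms(1) by (simp add: degree_Dop degree_phi)
  note R_props = rootrad_nonneg_zero_free[OF this, folded R_def]
  have dh_phi: "dh (Z (phi n)) (Z (Dop n a (phi n))) = ereal R"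
    unfolding R_def by (rule dh_Z_phi[OF assms(1) \<open>degree (Dop n a (phi n)) \<ge> 1\<close>])
  have "Kh n (Dop n a) = ereal R"
  proof (rule antisym)
    show "Kh n (Dop n a) \<le> ereal R"
      unfolding Kh_def Pn_def using dh_Z_Dop_le[OF \<open>a 0 \<noteq> 0\<close> R_props] by (blast intro: SUP_least)
    show "ereal R \<le> Kh n (Dop n a)"
      unfolding Kh_def dh_phi[symmetric] by (rule SUP_upper) (simp add: Pn_def degree_phi)
  qed
  with dh_phi show ?thesis unfolding R_def by simp
qed

end
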